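(* Let $\mathbf A$ be an algebra with a Mal'cev term $q$. Then there exists a largest clone $\mathcal C$ on $A$ containing $q$ such that the algebra $(A,\mathcal C)$ has the same congruence lattice as $\mathbf A$ and, for every $n\ge1$ and all congruences $\alpha_0,\dots,\alpha_{n-1}$, the commutator $[\alpha_0,\dots,\alpha_{n-1}]$ computed in $(A,\mathcal C)$ equals the one computed in $\mathbf A$.
   Context: A Mal'cev term of $\mathbf A$ is a ternary term operation $q$ with $q(x,x,y)=y=q(y,x,x)$. For a clone $\mathcal C$ on $A$, $(A,\mathcal C)$ denotes the algebra whose operations are those of $\mathcal C$. Higher commutator (Bulatov): for congruences $\alpha_0,\dots,\alpha_{n-1},\gamma$ of an algebra, say $\alpha_0,\dots,\alpha_{n-2}$ centralize $\alpha_{n-1}$ modulo $\gamma$ if for all tuples $\mathbf a_i,\mathbf b_i$ ($i<n$, with $\mathbf a_i\neq\mathbf b_i$ congruent modulo $\alpha_i$ coordinatewise) and every term operation $t$ such that $t(\mathbf x_0,\dots,\mathbf x_{n-2},\mathbf a_{n-1})\equiv_\gamma t(\mathbf x_0,\dots,\mathbf x_{n-2},\mathbf b_{n-1})$ for all $(\mathbf x_0,\dots,\mathbf x_{n-2})\in(\{\mathbf a_0,\mathbf b_0\}\times\dots\times\{\mathbf a_{n-2},\mathbf b_{n-2}\})\setminus\{(\mathbf b_0,\dots,\mathbf b_{n-2})\}$, we have $t(\mathbf b_0,\dots,\mathbf b_{n-2},\mathbf a_{n-1})\equiv_\gamma t(\mathbf b_0,\dots,\mathbf b_{n-2},\mathbf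 b_{n-1})$. The commutator $[\alpha_0,\dots,\alpha_{n-1}]$ is the smallest congruence $\gamma$ such that $\alpha_0,\dots,\alpha_{n-2}$ centralize $\alpha_{n-1}$ modulo $\gamma$. *)

theory Defs
  imports Main
begin

text \<open>The universe of an algebra is the type 'a.  A finitary operation is a pair (n, f):
  its arity n and a function on lists, only the values on lists of length n being relevant.
  An algebra is given by its set F of fundamental operations.\<close>

type_synonym 'a operation = "nat \<times> ('a list \<Rightarrow> 'a)"

definition proj_op :: "nat \<Rightarrow> nat \<Rightarrow> 'a operation" where
  "proj_op m i = (m, \<lambda>xs. if length xs = m then xs ! i else undefined)"

definition comp_op :: "('a list \<Rightarrow> 'a) \<Rightarrow> nat \<Rightarrow> ('a list \<Rightarrow> 'a) list \<Rightarrow> 'a operation" where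
  "comp_op f m gs = (m, \<lambda>xs. if length xs = m then f (map (\<lambda>g. g xs) gs) else undefined)"

inductive_set Clo :: "'a operation set \<Rightarrow> 'a operation set" for F where
  proj: "i < m \<Longrightarrow> proj_op m i \<in> Clo F"
| comp: "(n, f) \<in> F \<Longrightarrow> length gs = n \<Longrightarrow> 0 < m \<Longrightarrow> (\<forall>g\<in>set gs. (m, g) \<in> Clo F)
          \<Longrightarrow> comp_op f m gs \<in> Clo F"

definition is_clone :: "'a operation set \<Rightarrow> bool" where
  "is_clone C \<longleftrightarrow>
     (\<forall>(n, f)\<in>C. 0 < n \<and> (\<forall>xs. length xs \<noteq> n \<longrightarrow> f xs = undefined)) \<and>
     (\<forall>m i. i < m \<longrightarrow> proj_op m i \<in> C) \<and>
     (\<forall>n f m gs. (n, f) \<in> C \<longrightarrow> length gs = n \<longrightarrow> (\<forall>g\<in>set gs. (m, g) \<in> C)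
        \<longrightarrow> comp_op f m gs \<in> C)"

definition malcev_term :: "'a operation set \<Rightarrow> 'a operation \<Rightarrow> bool" where
  "malcev_term F q \<longleftrightarrow> q \<in> Clo F \<and> fst q = 3 \<and>
     (\<forall>x y. snd q [x, x, y] = y \<and> snd q [y, x, x] = y)"

definition Con :: "'a operation set \<Rightarrow> 'a rel set" where
  "Con F = {\<theta>. equiv UNIV \<theta> \<and>
     (\<forall>(n, f)\<in>F. \<forall>xs ys. length xs = n \<longrightarrow> length ys = n \<longrightarrow>
        list_all2 (\<lambda>x y. (x, y) \<in> \<theta>) xs ys \<longrightarrow> (f xs, f ys) \<in> \<theta>)}"

text \<open>alphas = [alpha_0, ..., alpha_{n-1}]; the first n-1 centralize the last modulo gamma.
  Tuples a_i, b_i are lists as!i, bs!i; the term t = (m, f) takes the blocks concatenated.\<close>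
definition centralizes :: "'a operation set \<Rightarrow> 'a rel list \<Rightarrow> 'a rel \<Rightarrow> bool" where
  "centralizes F alphas \<gamma> \<longleftrightarrow>
     (let n = length alphas in
      \<forall>m f as bs. (m, f) \<in> Clo F \<longrightarrow> length as = n \<longrightarrow> length bs = n \<longrightarrow>
        (\<forall>i<n. length (as ! i) = length (bs ! i) \<and> as ! i \<noteq> bs ! i \<and>
               list_all2 (\<lambda>x y. (x, y) \<in> alphas ! i) (as ! i) (bs ! i)) \<longrightarrow>
        length (concat as) = m \<longrightarrow>
        (\<forall>s :: nat \<Rightarrow> bool. (\<exists>i<n - 1. \<not> s i) \<longrightarrow>
           (f (concat (map (\<lambda>i. if s i then bs ! i else as ! i) [0..<n - 1] @ [as ! (n - 1)])),
            f (concat (map (\<lambda>i. if s i then bs ! i else as ! i) [0..<n - 1] @ [bs ! (n - 1)])))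
           \<in> \<gamma>) \<longrightarrow>
        (f (concat (map (\<lambda>i. bs ! i) [0..<n - 1] @ [as ! (n - 1)])),
         f (concat (map (\<lambda>i. bs ! i) [0..<n - 1] @ [bs ! (n - 1)]))) \<in> \<gamma>)"

definition commutator :: "'a operation set \<Rightarrow> 'a rel list \<Rightarrow> 'a rel" where
  "commutator F alphas = \<Inter>{\<gamma> \<in> Con F. centralizes F alphas \<gamma>}"

definition same_con_comm :: "'a operation set \<Rightarrow> 'a operation set \<Rightarrow> bool" where
  "same_con_comm C F \<longleftrightarrow> Con C = Con F \<and>
     (\<forall>alphas. 1 \<le> length alphas \<longrightarrow> set alphas \<subseteq> Con F \<longrightarrow>
        commutator C alphas = commutator F alphas)"

end

theory Submission
  imports Defs
begin

text \<open>For congruences $\alpha_0, \dots, \alpha_{n-1}$ let $M(\alpha_0, \dots, \alpha_{n-1})$ be the set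
  of $2^n$-cubes generated by the term operations from the cubes that are constant in all
  directions but one, varying along an $\alpha_i$-edge in direction $i$. In the presence of a
  Mal'cev term, $(u, v) \in [\alpha_0, \dots, \alpha_{n-1}]$ iff the cube that is $u$ everywhere
  except for $v$ at the top vertex lies in $M(\alpha_0, \dots, \alpha_{n-1})$. Conversely, by
  induction on $n$, these sets of cubes are determined by the commutators: the faces of a cube are
  lower-dimensional, the Mal'cev term fills in a cube agreeing off the top vertex, and the two top
  values must then be related modulo the commutator. Hence every clone with the same Mal'cev term,
  congruences and commutators has the same sets $M$, and the largest such clone consists of all
  operations preserving the congruences and the sets $M$ of $\mathbf A$.\<close>

section \<open>Clones\<close>

lemma Clo_normalized:
  assumes "(n, f) \<in> Clo F"
  shows "0 < n \<and> (\<forall>xs. length xs \<noteq> n \<longrightarrow> f xs = undefined)"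
proof -
  have "0 < fst x \<and> (\<forall>xs. length xs \<noteq> fst x \<longrightarrow> snd x xs = undefined)" if "x \<in> Clo F" for x
    using that by induction (auto simp: proj_op_def comp_op_def)
  from this[OF assms] show ?thesis by simp
qed

lemma Clo_comp:
  assumes "(n, f) \<in> Clo F" "length gs = n" "\<forall>g\<in>set gs. (m, g) \<in> Clo F"
  shows "comp_op f m gs \<in> Clo F"
proof -
  have "comp_op (snd x) m gs \<in> Clo F"
    if "x \<in> Clo F" "length gs = fst x" "\<forall>g\<in>set gs. (m, g) \<in> Clo F" for x gs
    using that
  proof (induction arbitrary: gs rule: Clo.induct)
    case (proj i k)
    then have g: "(m, gs ! i) \<in> Clo F" by (simp add: proj_op_def)
    have "comp_op (snd (proj_op k i)) m gs = (m, gs ! i)"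
      using Clo_normalized[OF g] proj by (auto simp: comp_op_def proj_op_def)
    with g show ?case by simp
  next
    case (comp k h hs k')
    then have "(m, gs ! 0) \<in> Clo F" by (simp add: comp_op_def)
    then have "0 < m" using Clo_normalized by blast
    let ?hs = "map (\<lambda>h'. snd (comp_op h' m gs)) hs"
    have "comp_op h m ?hs \<in> Clo F"
      using comp \<open>0 < m\<close> by (intro Clo.comp) (auto simp: comp_op_def)
    moreover have "comp_op (snd (comp_op h k' hs)) m gs = comp_op h m ?hs"
      using comp by (auto simp: comp_op_def fun_eq_iff comp_def)
    ultimately show ?case by simp
  qed
  from this[of "(n, f)"] assms show ?thesis by simp
qed

lemma is_clone_Clo: "is_clone (Clo F)"
  unfolding is_clone_def
proof (intro conjI)
  show "\<forall>(n, f)\<in>Clo F. 0 < n \<and> (\<forall>xs. length xs \<noteq> n \<longrightarrow> f xs = undefined)"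
    using Clo_normalized by blast
  show "\<forall>m i. i < m \<longrightarrow> proj_op m i \<in> Clo F" using Clo.proj by blast
  show "\<forall>n f m gs. (n, f) \<in> Clo F \<longrightarrow> length gs = n \<longrightarrow> (\<forall>g\<in>set gs. (m, g) \<in> Clo F)
        \<longrightarrow> comp_op f m gs \<in> Clo F" using Clo_comp by blast
qed

lemma clone_normalized:
  "is_clone E \<Longrightarrow> (n, f) \<in> E \<Longrightarrow> 0 < n \<and> (\<forall>xs. length xs \<noteq> n \<longrightarrow> f xs = undefined)"
  unfolding is_clone_def by (drule conjunct1, drule bspec, assumption, simp)

lemma clone_proj: "is_clone E \<Longrightarrow> i < m \<Longrightarrow> proj_op m i \<in> E"
  unfolding is_clone_def by (drule conjunct2, drule conjunct1, blast)

lemma clone_comp: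
  "is_clone E \<Longrightarrow> (n, f) \<in> E \<Longrightarrow> length gs = n \<Longrightarrow> \<forall>g\<in>set gs. (m, g) \<in> E
    \<Longrightarrow> comp_op f m gs \<in> E"
  unfolding is_clone_def by (drule conjunct2, drule conjunct2, blast)

lemma comp_op_projections:
  "comp_op f n (map (\<lambda>i. snd (proj_op n i)) [0..<n]) =
     (n, \<lambda>xs. if length xs = n then f xs else undefined)"
proof -
  have "(if length xs = n then f (map (\<lambda>g. g xs) (map (\<lambda>i. snd (proj_op n i)) [0..<n]))
         else undefined) = (if length xs = n then f xs else undefined)" for xs
    using map_nth[of xs] by (cases "length xs = n") (simp_all add: proj_op_def o_def)
  then show ?thesis by (simp add: comp_op_def)
qed

lemma op_in_Clo:
  assumes "(n, f) \<in> F" "0 < n"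
  shows "(n, \<lambda>xs. if length xs = n then f xs else undefined) \<in> Clo F"
proof -
  have "comp_op f n (map (\<lambda>i. snd (proj_op n i)) [0..<n]) \<in> Clo F"
    using assms by (intro Clo.comp) (auto simp: proj_op_def intro!: Clo.proj[of _ n, unfolded proj_op_def])
  then show ?thesis by (simp only: comp_op_projections)
qed

lemma clone_Clo_eq: assumes E: "is_clone E" shows "Clo E = E"
proof
  show "Clo E \<subseteq> E"
  proof
    fix x assume "x \<in> Clo E"
    then show "x \<in> E"
    proof induction
      case (proj i m) then show ?case using clone_proj[OF E] by blast
    next
      case (comp n f gs m) then show ?case using clone_comp[OF E] by blast
    qed
  qed
  show "E \<subseteq> Clo E"
  proof (rule subrelI)
    fix n f assume nf: "(n, f) \<in> E"
    have "(\<lambda>xs. if length xs = n then f xs else undefined) = f"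
      using clone_normalized[OF E nf] by auto
    then show "(n, f) \<in> Clo E"
      using op_in_Clo[OF nf] clone_normalized[OF E nf] by simp
  qed
qed

lemma Clo_Clo: "Clo (Clo F) = Clo F"
  by (rule clone_Clo_eq[OF is_clone_Clo])

fun preserves :: "'a operation \<Rightarrow> 'a rel \<Rightarrow> bool" where
  "preserves (n, f) \<theta> \<longleftrightarrow> (\<forall>xs ys. length xs = n \<longrightarrow> length ys = n \<longrightarrow>
        list_all2 (\<lambda>x y. (x, y) \<in> \<theta>) xs ys \<longrightarrow> (f xs, f ys) \<in> \<theta>)"

lemma Con_iff: "\<theta> \<in> Con F \<longleftrightarrow> equiv UNIV \<theta> \<and> (\<forall>x\<in>F. preserves x \<theta>)"
  unfolding Con_def by auto

lemma preserves_comp: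
  assumes "preserves (n, f) \<theta>" "length gs = n" "\<forall>g\<in>set gs. preserves (m, g) \<theta>"
  shows "preserves (comp_op f m gs) \<theta>"
  using assms by (auto simp: comp_op_def list_all2_conv_all_nth)

lemma Clo_preserves:
  assumes \<theta>: "\<theta> \<in> Con F" and x: "x \<in> Clo F"
  shows "preserves x \<theta>"
  using x
proof induction
  case (proj i m)
  then show ?case using \<theta> by (auto simp: Con_iff proj_op_def list_all2_conv_all_nth)
next
  case (comp n f gs m)
  then show ?case using \<theta> preserves_comp[of n f \<theta> gs m] by (auto simp: Con_iff)
qed

lemma Con_Clo: "Con (Clo F) = Con F"
proof (intro equalityI subsetI)
  fix \<theta> assume \<theta>: "\<theta> \<in> Con (Clo F)"
  have "preserves (n, f) \<theta>" if nf: "(n, f) \<in> F" for n f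
  proof (cases "n = 0")
    case True
    then show ?thesis using \<theta> by (simp add: Con_iff equiv_def refl_on_def)
  next
    case False
    then have "preserves (n, \<lambda>xs. if length xs = n then f xs else undefined) \<theta>"
      using op_in_Clo[OF nf] \<theta> unfolding Con_iff by blast
    then show ?thesis by fastforce
  qed
  then show "\<theta> \<in> Con F" using \<theta> by (auto simp: Con_iff)
next
  fix \<theta> assume "\<theta> \<in> Con F"
  then show "\<theta> \<in> Con (Clo F)" using Clo_preserves by (auto simp: Con_iff)
qed

lemma commutator_Clo: "commutator (Clo F) \<alpha> = commutator F \<alpha>"
  unfolding commutator_def centralizes_def Clo_Clo Con_Clo ..

lemma clone_minor:
  assumes E: "is_clone E" and t: "(m, t) \<in> E" and \<pi>: "\<forall>p<m. \<pi> p < M"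
  shows "\<exists>g. (M, g) \<in> E \<and> (\<forall>xs. length xs = M \<longrightarrow> g xs = t (map (\<lambda>p. xs ! \<pi> p) [0..<m]))"
proof -
  let ?gs = "map (\<lambda>p. snd (proj_op M (\<pi> p))) [0..<m]"
  have "\<forall>g\<in>set ?gs. (M, g) \<in> E"
    using clone_proj[OF E] \<pi> by (auto simp: proj_op_def)
  then have "comp_op t M ?gs \<in> E" using clone_comp[OF E t] by simp
  then show ?thesis by (intro exI[of _ "snd (comp_op t M ?gs)"]) (simp add: comp_op_def proj_op_def o_def)
qed

lemma clone_take_minor:
  assumes E: "is_clone E" and f: "(m, f) \<in> E"
  shows "\<exists>g. (m + M, g) \<in> E \<and> (\<forall>xs. length xs = m + M \<longrightarrow> g xs = f (take m xs))"
proof -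
  have "take m xs = map (\<lambda>p. xs ! p) [0..<m]" if "length xs = m + M" for xs :: "'a list"
    using that by (intro nth_equalityI) auto
  then show ?thesis using clone_minor[OF E f, of "\<lambda>p. p" "m + M"] by auto
qed

lemma clone_drop_minor:
  assumes E: "is_clone E" and f: "(M, f) \<in> E"
  shows "\<exists>g. (m + M, g) \<in> E \<and> (\<forall>xs. length xs = m + M \<longrightarrow> g xs = f (drop m xs))"
proof -
  have "drop m xs = map (\<lambda>p. xs ! (p + m)) [0..<M]" if "length xs = m + M" for xs :: "'a list"
    using that by (intro nth_equalityI) (auto simp: add.commute)
  then show ?thesis using clone_minor[OF E f, of "\<lambda>p. p + m" "m + M"] by auto
qed

lemma clone_ops_on_concat:
  assumes E: "is_clone E" and L: "\<forall>(t, ks)\<in>set L. (length ks, t) \<in> E"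
  shows "\<exists>gs. length gs = length L \<and> (\<forall>g\<in>set gs. (length (concat (map snd L)), g) \<in> E) \<and>
    (\<forall>s. map (\<lambda>g. g (map (\<lambda>k. k s) (concat (map snd L)))) gs = map (\<lambda>(t, ks). t (map (\<lambda>k. k s) ks)) L)"
  using L
proof (induction L)
  case Nil then show ?case by simp
next
  case (Cons tks L)
  obtain t ks where tks: "tks = (t, ks)" by force
  let ?m = "length ks" and ?M = "length (concat (map snd L))"
  obtain gs where gs: "length gs = length L" "\<forall>g\<in>set gs. (?M, g) \<in> E"
    "\<forall>s. map (\<lambda>g. g (map (\<lambda>k. k s) (concat (map snd L)))) gs = map (\<lambda>(t, ks). t (map (\<lambda>k. k s) ks)) L"
    using Cons by auto
  obtain g0 where g0: "(?m + ?M, g0) \<in> E" "\<forall>xs. length xs = ?m + ?M \<longrightarrow> g0 xs = t (take ?m xs)"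
    using clone_take_minor[OF E] Cons.prems tks by fastforce
  have "\<forall>g\<in>set gs. \<exists>h. (?m + ?M, h) \<in> E \<and> (\<forall>xs. length xs = ?m + ?M \<longrightarrow> h xs = g (drop ?m xs))"
    using clone_drop_minor[OF E] gs(2) by blast
  then obtain sh where sh: "\<forall>g\<in>set gs. (?m + ?M, sh g) \<in> E \<and>
      (\<forall>xs. length xs = ?m + ?M \<longrightarrow> sh g xs = g (drop ?m xs))"
    by metis
  show ?case
  proof (intro exI[of _ "g0 # map sh gs"] conjI allI)
    show "length (g0 # map sh gs) = length (tks # L)" using gs by simp
    show "\<forall>g\<in>set (g0 # map sh gs). (length (concat (map snd (tks # L))), g) \<in> E"
      using g0 sh tks by auto
    fix s
    let ?xs = "map (\<lambda>k. k s) (concat (map snd (tks # L)))"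
    have xs: "length ?xs = ?m + ?M" "take ?m ?xs = map (\<lambda>k. k s) ks"
      "drop ?m ?xs = map (\<lambda>k. k s) (concat (map snd L))"
      using tks by simp_all
    have "map (\<lambda>g. g ?xs) (map sh gs) = map (\<lambda>(t, ks). t (map (\<lambda>k. k s) ks)) L"
      using sh xs gs(3) by (simp cong: map_cong)
    then show "map (\<lambda>g. g ?xs) (g0 # map sh gs) = map (\<lambda>(t, ks). t (map (\<lambda>k. k s) ks)) (tks # L)"
      using g0 xs tks by simp
  qed
qed

section \<open>Cubes generated by a clone\<close>

text \<open>A cube maps the vertices of $\{0,1\}^n$ into the universe. Vertices are encoded as arbitrary
  functions \<open>nat \<Rightarrow> bool\<close>, of which only the first $n$ values matter.\<close>
type_synonym 'a cube = "(nat \<Rightarrow> bool) \<Rightarrow> 'a"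

definition coord_cube :: "nat \<Rightarrow> 'a \<Rightarrow> 'a \<Rightarrow> 'a cube" where
  "coord_cube i a b = (\<lambda>s. if s i then b else a)"

definition is_coord_cube :: "'a rel list \<Rightarrow> 'a cube \<Rightarrow> bool" where
  "is_coord_cube \<alpha> k \<longleftrightarrow> (\<exists>i a b. i < length \<alpha> \<and> (a, b) \<in> \<alpha> ! i \<and> k = coord_cube i a b)"

definition cubes :: "'a operation set \<Rightarrow> 'a rel list \<Rightarrow> 'a cube set" where
  "cubes E \<alpha> = {c. \<exists>t ks. (length ks, t) \<in> E \<and> (\<forall>k\<in>set ks. is_coord_cube \<alpha> k) \<and>
     c = (\<lambda>s. t (map (\<lambda>k. k s) ks))}"

lemma cubes_mono: "E \<subseteq> E' \<Longrightarrow> cubes E \<alpha> \<subseteq> cubes E' \<alpha>"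
  unfolding cubes_def by blast

lemma cubes_closed:
  assumes E: "is_clone E" and f: "(m, f) \<in> E" and cs: "length cs = m" "set cs \<subseteq> cubes E \<alpha>"
  shows "(\<lambda>s. f (map (\<lambda>c. c s) cs)) \<in> cubes E \<alpha>"
proof -
  have "\<forall>c\<in>set cs. \<exists>tks. (length (snd tks), fst tks) \<in> E \<and> (\<forall>k\<in>set (snd tks). is_coord_cube \<alpha> k) \<and>
      c = (\<lambda>s. fst tks (map (\<lambda>k. k s) (snd tks)))"
    using cs(2) unfolding cubes_def by fastforce
  then obtain rep where rep: "\<forall>c\<in>set cs. (length (snd (rep c)), fst (rep c)) \<in> E \<and>
      (\<forall>k\<in>set (snd (rep c)). is_coord_cube \<alpha> k) \<and> c = (\<lambda>s. fst (rep c) (map (\<lambda>k. k s) (snd (rep c))))"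
    by metis
  let ?L = "map rep cs"
  have "\<forall>(t, ks)\<in>set ?L. (length ks, t) \<in> E" using rep by auto
  from clone_ops_on_concat[OF E this] obtain gs where gs: "length gs = length ?L"
    "\<forall>g\<in>set gs. (length (concat (map snd ?L)), g) \<in> E"
    "\<forall>s. map (\<lambda>g. g (map (\<lambda>k. k s) (concat (map snd ?L)))) gs = map (\<lambda>(t, ks). t (map (\<lambda>k. k s) ks)) ?L"
    by blast
  let ?M = "length (concat (map snd ?L))"
  have "comp_op f ?M gs \<in> E" using clone_comp[OF E f] gs cs by simp
  moreover have "\<forall>k\<in>set (concat (map snd ?L)). is_coord_cube \<alpha> k" using rep by auto
  moreover have "map (\<lambda>c. c s) cs = map (\<lambda>g. g (map (\<lambda>k. k s) (concat (map snd ?L)))) gs" for s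
  proof -
    have "c s = fst (rep c) (map (\<lambda>k. k s) (snd (rep c)))" if "c \<in> set cs" for c
      using rep that by metis
    then have "map (\<lambda>c. c s) cs = map (\<lambda>(t, ks). t (map (\<lambda>k. k s) ks)) ?L"
      by (simp add: case_prod_beta)
    then show ?thesis using gs(3) by simp
  qed
  ultimately show ?thesis
    unfolding cubes_def by (force simp: comp_op_def)
qed

lemma cubes_reindex:
  assumes c: "c \<in> cubes E \<alpha>" and h: "\<And>k. is_coord_cube \<alpha> k \<Longrightarrow> is_coord_cube \<beta> (\<lambda>s. k (\<phi> s))"
  shows "(\<lambda>s. c (\<phi> s)) \<in> cubes E \<beta>"
proof -
  obtain t ks where tks: "(length ks, t) \<in> E" "\<forall>k\<in>set ks. is_coord_cube \<alpha> k"
    "c = (\<lambda>s. t (map (\<lambda>k. k s) ks))"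
    using c unfolding cubes_def by blast
  show ?thesis unfolding cubes_def
  proof (intro CollectI exI conjI)
    show "(length (map (\<lambda>k s. k (\<phi> s)) ks), t) \<in> E" using tks by simp
    show "\<forall>k\<in>set (map (\<lambda>k s. k (\<phi> s)) ks). is_coord_cube \<beta> k" using tks h by auto
    show "(\<lambda>s. c (\<phi> s)) = (\<lambda>s. t (map (\<lambda>k. k s) (map (\<lambda>k s. k (\<phi> s)) ks)))"
      using tks by (simp add: o_def)
  qed
qed

lemma coord_cube_in_cubes:
  assumes E: "is_clone E" and k: "is_coord_cube \<alpha> k"
  shows "k \<in> cubes E \<alpha>"
  unfolding cubes_def
proof (intro CollectI exI conjI)
  show "(length [k], snd (proj_op 1 0)) \<in> E" using clone_proj[OF E, of 0 1] by (simp add: proj_op_def)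
  show "\<forall>k\<in>set [k]. is_coord_cube \<alpha> k" using k by simp
  show "k = (\<lambda>s. snd (proj_op 1 0) (map (\<lambda>k. k s) [k]))" by (simp add: proj_op_def)
qed

lemma const_in_cubes:
  assumes E: "is_clone E" and "\<alpha> \<noteq> []" and "(x, x) \<in> \<alpha> ! 0"
  shows "(\<lambda>s. x) \<in> cubes E \<alpha>"
proof -
  have "is_coord_cube \<alpha> (coord_cube 0 x x)" using assms unfolding is_coord_cube_def by blast
  moreover have "coord_cube 0 x x = (\<lambda>s. x)" by (simp add: coord_cube_def)
  ultimately show ?thesis using coord_cube_in_cubes[OF E] by metis
qed

lemma cubes_cong_vertex:
  assumes c: "c \<in> cubes E \<alpha>"
    and k: "\<And>i a b. i < length \<alpha> \<Longrightarrow> (a, b) \<in> \<alpha> ! i \<Longrightarrow> coord_cube i a b s = coord_cube i a b s'"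
  shows "c s = c s'"
proof -
  obtain t ks where tks: "\<forall>k\<in>set ks. is_coord_cube \<alpha> k" "c = (\<lambda>s. t (map (\<lambda>k. k s) ks))"
    using c unfolding cubes_def by blast
  have "map (\<lambda>k. k s) ks = map (\<lambda>k. k s') ks"
    using tks(1) k unfolding is_coord_cube_def by (auto cong: map_cong)
  then show ?thesis using tks(2) by (simp del: map_eq_conv)
qed

definition depends_on_first :: "nat \<Rightarrow> 'a cube \<Rightarrow> bool" where
  "depends_on_first n c \<longleftrightarrow> (\<forall>s s'. (\<forall>j<n. s j = s' j) \<longrightarrow> c s = c s')"

lemma depends_on_firstD: "depends_on_first n c \<Longrightarrow> \<forall>j<n. s j = s' j \<Longrightarrow> c s = c s'"
  unfolding depends_on_first_def by blast

lemma cubes_depends_on_first: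
  assumes "c \<in> cubes E \<alpha>" shows "depends_on_first (length \<alpha>) c"
  unfolding depends_on_first_def
proof (intro allI impI)
  fix s s' :: "nat \<Rightarrow> bool" assume "\<forall>j<length \<alpha>. s j = s' j"
  then show "c s = c s'" by (intro cubes_cong_vertex[OF assms]) (simp add: coord_cube_def)
qed

lemma cubes_vertex_eq: "c \<in> cubes E \<alpha> \<Longrightarrow> \<forall>j<length \<alpha>. s j = s' j \<Longrightarrow> c s = c s'"
  by (rule depends_on_firstD[OF cubes_depends_on_first])

lemma cubes_trivial_direction:
  assumes c: "c \<in> cubes E \<alpha>" and i: "\<And>a b. (a, b) \<in> \<alpha> ! i \<Longrightarrow> a = b"
  shows "c s = c (s(i := x))"
proof (rule cubes_cong_vertex[OF c])
  fix j a b assume "(a, b) \<in> \<alpha> ! j"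
  then show "coord_cube j a b s = coord_cube j a b (s(i := x))"
    using i by (cases "j = i") (auto simp: coord_cube_def)
qed

text \<open>The values of the term operation $f$ on the box spanned by the blocks
  $\mathbf a_i, \mathbf b_i$, as they appear in the definition of centrality.\<close>
definition block_cube :: "('a list \<Rightarrow> 'a) \<Rightarrow> 'a list list \<Rightarrow> 'a list list \<Rightarrow> 'a cube" where
  "block_cube f as bs = (\<lambda>s. f (concat (map (\<lambda>i. if s i then bs ! i else as ! i) [0..<length as])))"

lemma block_cube_update_last:
  assumes "length as = Suc k"
  shows "block_cube f as bs (s(k := x)) =
    f (concat (map (\<lambda>i. if s i then bs ! i else as ! i) [0..<k] @ [if x then bs ! k else as ! k]))"
proof -
  have "map (\<lambda>i. if (s(k := x)) i then bs ! i else as ! i) [0..<k] =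
      map (\<lambda>i. if s i then bs ! i else as ! i) [0..<k]"
    by (rule map_cong) auto
  then have "map (\<lambda>i. if (s(k := x)) i then bs ! i else as ! i) [0..<Suc k] =
      map (\<lambda>i. if s i then bs ! i else as ! i) [0..<k] @ [if x then bs ! k else as ! k]"
    unfolding upt_Suc_append[OF le0] map_append by simp
  then show ?thesis using assms unfolding block_cube_def by (simp only:)
qed

lemma centralizes_block_cubeD:
  assumes cent: "centralizes E \<alpha> \<gamma>" and n: "length \<alpha> = Suc k" and f: "(m, f) \<in> Clo E"
    and blocks: "length as = length \<alpha>" "length bs = length \<alpha>"
      "\<forall>i<length \<alpha>. length (as ! i) = length (bs ! i) \<and> as ! i \<noteq> bs ! i \<and>
        list_all2 (\<lambda>x y. (x, y) \<in> \<alpha> ! i) (as ! i) (bs ! i)"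
      "length (concat as) = m"
    and off_top: "\<And>s. \<exists>i<k. \<not> s i \<Longrightarrow>
      (block_cube f as bs (s(k := False)), block_cube f as bs (s(k := True))) \<in> \<gamma>"
  shows "(block_cube f as bs ((\<lambda>_. True)(k := False)), block_cube f as bs (\<lambda>_. True)) \<in> \<gamma>"
proof -
  have upd: "block_cube f as bs (s(k := x)) = f (concat (map (\<lambda>i. if s i then bs ! i else as ! i) [0..<k] @
      [if x then bs ! k else as ! k]))" for s x
    using blocks(1) n by (intro block_cube_update_last) simp
  have "(f (concat (map (\<lambda>i. if s i then bs ! i else as ! i) [0..<k] @ [as ! k])),
      f (concat (map (\<lambda>i. if s i then bs ! i else as ! i) [0..<k] @ [bs ! k]))) \<in> \<gamma>"
    if "\<exists>i<k. \<not> s i" for s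
    using off_top[OF that] by (simp add: upd)
  then have "(f (concat (map (\<lambda>i. bs ! i) [0..<k] @ [as ! k])),
      f (concat (map (\<lambda>i. bs ! i) [0..<k] @ [bs ! k]))) \<in> \<gamma>"
    using cent f blocks[unfolded n] unfolding centralizes_def Let_def n diff_Suc_1 by blast
  moreover have "(\<lambda>_. True)(k := True) = (\<lambda>_ :: nat. True)" by (rule ext) simp
  ultimately show ?thesis using upd[of "\<lambda>_. True" False] upd[of "\<lambda>_. True" True] by simp
qed

lemma map_coord_cubes_zip:
  "length xs = length ys \<Longrightarrow>
    map (\<lambda>k. k s) (map (\<lambda>(a, b). coord_cube i a b) (zip xs ys)) = (if s i then ys else xs)"
proof (induction xs arbitrary: ys)
  case Nil then show ?case by simp
next
  case (Cons a xs)
  then obtain b ys' where "ys = b # ys'" "length xs = length ys'" by (cases ys) auto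
  then show ?case using Cons.IH[of ys'] by (simp add: coord_cube_def)
qed

lemma block_cube_in_cubes:
  assumes f: "(m, f) \<in> E" and las: "length as = length \<alpha>" and lbs: "length bs = length \<alpha>"
    and blk: "\<forall>i<length \<alpha>. length (as ! i) = length (bs ! i) \<and>
      list_all2 (\<lambda>x y. (x, y) \<in> \<alpha> ! i) (as ! i) (bs ! i)"
    and lc: "length (concat as) = m"
  shows "block_cube f as bs \<in> cubes E \<alpha>"
proof -
  let ?n = "length \<alpha>"
  define ks where
    "ks = concat (map (\<lambda>i. map (\<lambda>(a, b). coord_cube i a b) (zip (as ! i) (bs ! i))) [0..<?n])"
  have ev: "map (\<lambda>k. k s) ks = concat (map (\<lambda>i. if s i then bs ! i else as ! i) [0..<?n])" for s
  proof -
    have "map (\<lambda>k. k s) ks = concat (map (\<lambda>i. map (\<lambda>k. k s)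
        (map (\<lambda>(a, b). coord_cube i a b) (zip (as ! i) (bs ! i)))) [0..<?n])"
      unfolding ks_def by (simp add: map_concat o_def)
    also have "\<dots> = concat (map (\<lambda>i. if s i then bs ! i else as ! i) [0..<?n])"
    proof (intro arg_cong[where f = concat] map_cong refl)
      fix i assume "i \<in> set [0..<?n]"
      then show "map (\<lambda>k. k s) (map (\<lambda>(a, b). coord_cube i a b) (zip (as ! i) (bs ! i))) =
          (if s i then bs ! i else as ! i)"
        using blk by (intro map_coord_cubes_zip) simp
    qed
    finally show ?thesis .
  qed
  have "length ks = length (concat (map (\<lambda>i. as ! i) [0..<?n]))"
    using ev[of "\<lambda>_. False"] by (metis (no_types, lifting) length_map)
  also have "map (\<lambda>i. as ! i) [0..<?n] = as" using las by (intro nth_equalityI) auto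
  finally have lks: "length ks = m" using lc by simp
  have "\<forall>k\<in>set ks. is_coord_cube \<alpha> k"
  proof
    fix k assume "k \<in> set ks"
    then obtain i a b where i: "i < ?n" and ab: "(a, b) \<in> set (zip (as ! i) (bs ! i))" "k = coord_cube i a b"
      unfolding ks_def by auto
    have "(a, b) \<in> \<alpha> ! i" using ab(1) blk i unfolding list_all2_iff by blast
    then show "is_coord_cube \<alpha> k" using ab i unfolding is_coord_cube_def by blast
  qed
  moreover have "block_cube f as bs = (\<lambda>s. f (map (\<lambda>k. k s) ks))"
    using ev las by (simp add: block_cube_def)
  ultimately show ?thesis using f lks unfolding cubes_def by blast
qed

lemma length_concat_uniform: "\<forall>i<n. length (g i) = L \<Longrightarrow> length (concat (map g [0..<n])) = n * L"
  by (induction n) auto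

lemma nth_concat_uniform:
  "\<forall>i<n. length (g i) = L \<Longrightarrow> i < n \<Longrightarrow> p < L \<Longrightarrow> concat (map g [0..<n]) ! (i * L + p) = g i ! p"
proof (induction n)
  case 0 then show ?case by simp
next
  case (Suc n)
  have l: "length (concat (map g [0..<n])) = n * L"
    using Suc.prems(1) length_concat_uniform[of n g L] by simp
  show ?case
  proof (cases "i < n")
    case True
    have "i * L + p < Suc i * L" using Suc.prems by simp
    also have "\<dots> \<le> n * L" using True by (intro mult_right_mono) auto
    finally show ?thesis using Suc True l by (simp add: nth_append)
  next
    case False
    then have "i = n" using Suc by simp
    then show ?thesis using l Suc.prems by (simp add: nth_append)
  qed
qed

lemma block_index_less: "d < n \<Longrightarrow> p < m \<Longrightarrow> d * Suc m + p < n * Suc m"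
proof -
  assume "d < n" "p < m"
  then have "d * Suc m + p < Suc d * Suc m" by simp
  also have "\<dots> \<le> n * Suc m" using \<open>d < n\<close> by (intro mult_right_mono) auto
  finally show ?thesis .
qed

lemma map_nth_concat_blocks:
  assumes len: "\<forall>i<n. length (as i) = Suc m \<and> length (bs i) = Suc m"
    and entries: "\<forall>i<n. \<forall>p<m. as i ! p = A p \<and> bs i ! p = (if d p = i then B p else A p)"
    and d: "\<forall>p<m. d p < n"
  shows "map (\<lambda>p. concat (map (\<lambda>i. if s i then bs i else as i) [0..<n]) ! (d p * Suc m + p)) [0..<m] =
    map (\<lambda>p. coord_cube (d p) (A p) (B p) s) [0..<m]"
proof (rule map_cong[OF refl])
  fix p assume "p \<in> set [0..<m]"
  then show "concat (map (\<lambda>i. if s i then bs i else as i) [0..<n]) ! (d p * Suc m + p) =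
      coord_cube (d p) (A p) (B p) s"
    using nth_concat_uniform[of n "\<lambda>i. if s i then bs i else as i" "Suc m" "d p" p] len entries d
    by (simp add: coord_cube_def)
qed

lemma cube_is_block_cube:
  assumes E: "is_clone E" and c: "c \<in> cubes E \<alpha>" and equiv: "\<forall>\<theta>\<in>set \<alpha>. equiv UNIV \<theta>"
    and nontriv: "\<forall>i<length \<alpha>. \<exists>a b. a \<noteq> b \<and> (a, b) \<in> \<alpha> ! i"
  shows "\<exists>m f as bs. (m, f) \<in> E \<and> length as = length \<alpha> \<and> length bs = length \<alpha> \<and>
    (\<forall>i<length \<alpha>. length (as ! i) = length (bs ! i) \<and> as ! i \<noteq> bs ! i \<and>
        list_all2 (\<lambda>x y. (x, y) \<in> \<alpha> ! i) (as ! i) (bs ! i)) \<and>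
    length (concat as) = m \<and> c = block_cube f as bs"
proof -
  let ?n = "length \<alpha>"
  obtain t ks where tks: "(length ks, t) \<in> E" "\<forall>k\<in>set ks. is_coord_cube \<alpha> k"
    "c = (\<lambda>s. t (map (\<lambda>k. k s) ks))"
    using c unfolding cubes_def by blast
  define m where "m = length ks"
  have "\<forall>p<m. \<exists>i a b. i < ?n \<and> (a, b) \<in> \<alpha> ! i \<and> ks ! p = coord_cube i a b"
    using tks(2) unfolding m_def is_coord_cube_def by simp
  then obtain dir A B where coord: "\<forall>p<m. dir p < ?n \<and> (A p, B p) \<in> \<alpha> ! dir p \<and>
      ks ! p = coord_cube (dir p) (A p) (B p)"
    by metis
  then have ks: "ks = map (\<lambda>p. coord_cube (dir p) (A p) (B p)) [0..<m]"
    by (intro nth_equalityI) (simp_all add: m_def)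
  obtain a0 b0 where ab0: "\<forall>i<?n. a0 i \<noteq> b0 i \<and> (a0 i, b0 i) \<in> \<alpha> ! i"
    using nontriv by metis
  \<comment> \<open>Block $i$ repeats all arguments of the term, changing those that vary in direction $i$;
    the final entries only serve to make the two blocks distinct.\<close>
  define ab where "ab i = map A [0..<m] @ [a0 i]" for i
  define bb where "bb i = map (\<lambda>p. if dir p = i then B p else A p) [0..<m] @ [b0 i]" for i
  let ?as = "map ab [0..<?n]" and ?bs = "map bb [0..<?n]"
  have lab: "length (ab i) = Suc m" "length (bb i) = Suc m" for i by (simp_all add: ab_def bb_def)
  have "\<forall>p<m. dir p * Suc m + p < ?n * Suc m" using coord block_index_less by blast
  from clone_minor[OF E _ this] tks(1) obtain g where g: "(?n * Suc m, g) \<in> E"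
    "\<forall>xs. length xs = ?n * Suc m \<longrightarrow> g xs = t (map (\<lambda>p. xs ! (dir p * Suc m + p)) [0..<m])"
    unfolding m_def by blast
  have blocks: "\<forall>i<?n. length (?as ! i) = length (?bs ! i) \<and> ?as ! i \<noteq> ?bs ! i \<and>
      list_all2 (\<lambda>x y. (x, y) \<in> \<alpha> ! i) (?as ! i) (?bs ! i)"
  proof (intro allI impI conjI)
    fix i assume i: "i < ?n"
    show "length (?as ! i) = length (?bs ! i)" using i lab by simp
    show "?as ! i \<noteq> ?bs ! i" using i ab0 by (simp add: ab_def bb_def)
    have "(A p, A p) \<in> \<alpha> ! i" for p using equiv i by (auto simp: equiv_def refl_on_def)
    then show "list_all2 (\<lambda>x y. (x, y) \<in> \<alpha> ! i) (?as ! i) (?bs ! i)"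
      using i lab coord ab0 by (auto simp: list_all2_conv_all_nth ab_def bb_def nth_append less_Suc_eq)
  qed
  have "c s = block_cube g ?as ?bs s" for s
  proof -
    let ?xs = "concat (map (\<lambda>i. if s i then bb i else ab i) [0..<?n])"
    have "block_cube g ?as ?bs s = g ?xs"
      unfolding block_cube_def by (auto intro!: arg_cong[where f = g] arg_cong[where f = concat] map_cong)
    also have "\<dots> = t (map (\<lambda>p. ?xs ! (dir p * Suc m + p)) [0..<m])"
      using g(2) length_concat_uniform[of ?n "\<lambda>i. if s i then bb i else ab i" "Suc m"] lab by simp
    also have "map (\<lambda>p. ?xs ! (dir p * Suc m + p)) [0..<m] =
        map (\<lambda>p. coord_cube (dir p) (A p) (B p) s) [0..<m]"
      by (rule map_nth_concat_blocks) (use lab coord in \<open>auto simp: ab_def bb_def nth_append\<close>)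
    also have "t \<dots> = c s" using tks(3) ks by (simp add: o_def)
    finally show ?thesis ..
  qed
  moreover have "length (concat ?as) = ?n * Suc m"
    using length_concat_uniform[of ?n ab "Suc m"] lab by simp
  ultimately show ?thesis using g(1) blocks
    by (intro exI[of _ "?n * Suc m"] exI[of _ g] exI[of _ ?as] exI[of _ ?bs]) (simp add: fun_eq_iff)
qed

section \<open>The commutator in the presence of a Mal'cev operation\<close>

lemma equiv_list_refl:
  assumes "\<forall>\<theta>\<in>set \<alpha>. equiv UNIV \<theta>" "i < length \<alpha>" shows "(x, x) \<in> \<alpha> ! i"
  using assms(1) nth_mem[OF assms(2)] unfolding equiv_def refl_on_def by blast

lemma equiv_list_sym:
  assumes "\<forall>\<theta>\<in>set \<alpha>. equiv UNIV \<theta>" "i < length \<alpha>" "(x, y) \<in> \<alpha> ! i"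
  shows "(y, x) \<in> \<alpha> ! i"
  using assms(1,3) nth_mem[OF assms(2)] unfolding equiv_def sym_def by blast

lemma const_in_cubes_equiv:
  assumes "is_clone E" "\<alpha> \<noteq> []" "\<forall>\<theta>\<in>set \<alpha>. equiv UNIV \<theta>"
  shows "(\<lambda>s. x) \<in> cubes E \<alpha>"
  using const_in_cubes[OF assms(1,2) equiv_list_refl[OF assms(3)]] assms(2) by simp

definition collapse :: "nat \<Rightarrow> 'a cube \<Rightarrow> 'a cube" where
  "collapse j d = (\<lambda>s. d (s(j := False)))"

lemma collapse_in_cubes:
  assumes equivs: "\<forall>\<theta>\<in>set \<alpha>. equiv UNIV \<theta>" and c: "c \<in> cubes E \<alpha>"
  shows "collapse j c \<in> cubes E \<alpha>"
  unfolding collapse_def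
proof (rule cubes_reindex[OF c])
  fix k assume "is_coord_cube \<alpha> k"
  then obtain i a b where k: "i < length \<alpha>" "(a, b) \<in> \<alpha> ! i" "k = coord_cube i a b"
    unfolding is_coord_cube_def by blast
  show "is_coord_cube \<alpha> (\<lambda>s. k (s(j := False)))"
  proof (cases "i = j")
    case True
    then have "(\<lambda>s. k (s(j := False))) = coord_cube i a a" using k by (auto simp: coord_cube_def)
    then show ?thesis
      using k equiv_list_refl[OF equivs k(1)] unfolding is_coord_cube_def by blast
  next
    case False
    then have "(\<lambda>s. k (s(j := False))) = coord_cube i a b" using k by (auto simp: coord_cube_def)
    then show ?thesis using k unfolding is_coord_cube_def by blast
  qed
qed

definition reflect :: "(nat \<Rightarrow> bool) \<Rightarrow> (nat \<Rightarrow> bool) \<Rightarrow> (nat \<Rightarrow> bool)" where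
  "reflect w s = (\<lambda>j. if w j then s j else \<not> s j)"

lemma reflect_in_cubes:
  assumes equivs: "\<forall>\<theta>\<in>set \<alpha>. equiv UNIV \<theta>" and c: "c \<in> cubes E \<alpha>"
  shows "(\<lambda>s. c (reflect w s)) \<in> cubes E \<alpha>"
proof (rule cubes_reindex[OF c])
  fix k assume "is_coord_cube \<alpha> k"
  then obtain i a b where k: "i < length \<alpha>" "(a, b) \<in> \<alpha> ! i" "k = coord_cube i a b"
    unfolding is_coord_cube_def by blast
  show "is_coord_cube \<alpha> (\<lambda>s. k (reflect w s))"
  proof (cases "w i")
    case True
    then have "(\<lambda>s. k (reflect w s)) = coord_cube i a b" using k by (auto simp: coord_cube_def reflect_def)
    then show ?thesis using k unfolding is_coord_cube_def by blast
  next
    case False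
    then have "(\<lambda>s. k (reflect w s)) = coord_cube i b a" using k by (auto simp: coord_cube_def reflect_def)
    then show ?thesis
      using k equiv_list_sym[OF equivs k(1,2)] unfolding is_coord_cube_def by blast
  qed
qed

definition corner_cube :: "nat \<Rightarrow> 'a \<Rightarrow> 'a \<Rightarrow> 'a cube" where
  "corner_cube n u v = (\<lambda>s. if \<forall>j<n. s j then v else u)"

definition cube_rel :: "'a operation set \<Rightarrow> 'a rel list \<Rightarrow> 'a rel" where
  "cube_rel E \<alpha> = {(u, v). corner_cube (length \<alpha>) u v \<in> cubes E \<alpha>}"

lemma corner_cube_same [simp]: "corner_cube n u u = (\<lambda>s. u)"
  by (simp add: corner_cube_def)

lemma corner_cube_nontrivial:
  assumes "corner_cube (length \<alpha>) u v \<in> cubes E \<alpha>" "u \<noteq> v"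
  shows "\<forall>i<length \<alpha>. \<exists>a b. a \<noteq> b \<and> (a, b) \<in> \<alpha> ! i"
proof (rule ccontr)
  assume "\<not> (\<forall>i<length \<alpha>. \<exists>a b. a \<noteq> b \<and> (a, b) \<in> \<alpha> ! i)"
  then obtain i where i: "i < length \<alpha>" and triv: "\<And>a b. (a, b) \<in> \<alpha> ! i \<Longrightarrow> a = b" by blast
  have "corner_cube (length \<alpha>) u v (\<lambda>_. True) = corner_cube (length \<alpha>) u v ((\<lambda>_. True)(i := False))"
    by (rule cubes_trivial_direction[OF assms(1) triv])
  moreover have "corner_cube (length \<alpha>) u v ((\<lambda>_. True)(i := False)) = u"
    using i unfolding corner_cube_def by (subst if_not_P) auto
  ultimately show False using \<open>u \<noteq> v\<close> by (simp add: corner_cube_def)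
qed

locale malcev_clone =
  fixes E :: "'a operation set" and q :: "'a list \<Rightarrow> 'a"
  assumes clone: "is_clone E" and malcev_op: "(3, q) \<in> E"
    and malcev_left: "q [x, x, y] = y" and malcev_right: "q [y, x, x] = y"
begin

lemma malcev_in_cubes:
  assumes "c1 \<in> cubes E \<alpha>" "c2 \<in> cubes E \<alpha>" "c3 \<in> cubes E \<alpha>"
  shows "(\<lambda>s. q [c1 s, c2 s, c3 s]) \<in> cubes E \<alpha>"
  using cubes_closed[OF clone malcev_op, of "[c1, c2, c3]" \<alpha>] assms by simp

lemma cube_rel_equiv:
  assumes ne: "\<alpha> \<noteq> []" and equivs: "\<forall>\<theta>\<in>set \<alpha>. equiv UNIV \<theta>"
  shows "equiv UNIV (cube_rel E \<alpha>)"
proof -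
  let ?K = "corner_cube (length \<alpha>)"
  have refl: "(u, u) \<in> cube_rel E \<alpha>" for u
    unfolding cube_rel_def using const_in_cubes_equiv[OF clone ne equivs] by simp
  have sym: "(v, u) \<in> cube_rel E \<alpha>" if "(u, v) \<in> cube_rel E \<alpha>" for u v
  proof -
    have "(\<lambda>s. q [?K v v s, ?K u v s, ?K u u s]) \<in> cubes E \<alpha>"
      using that refl unfolding cube_rel_def by (intro malcev_in_cubes) auto
    moreover have "(\<lambda>s. q [?K v v s, ?K u v s, ?K u u s]) = ?K v u"
      by (rule ext) (auto simp: corner_cube_def malcev_left malcev_right)
    ultimately show ?thesis unfolding cube_rel_def by simp
  qed
  have trans: "(u, w) \<in> cube_rel E \<alpha>" if "(u, v) \<in> cube_rel E \<alpha>" "(v, w) \<in> cube_rel E \<alpha>" for u v w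
  proof -
    have "(\<lambda>s. q [?K u v s, ?K v v s, ?K v w s]) \<in> cubes E \<alpha>"
      using that refl unfolding cube_rel_def by (intro malcev_in_cubes) auto
    moreover have "(\<lambda>s. q [?K u v s, ?K v v s, ?K v w s]) = ?K u w"
      by (rule ext) (auto simp: corner_cube_def malcev_left malcev_right)
    ultimately show ?thesis unfolding cube_rel_def by simp
  qed
  show ?thesis
  proof (rule equivI)
    show "cube_rel E \<alpha> \<subseteq> UNIV \<times> UNIV" by simp
    show "refl (cube_rel E \<alpha>)" unfolding refl_on_def using refl by auto
    show "sym (cube_rel E \<alpha>)" using sym by (blast intro: symI)
    show "trans (cube_rel E \<alpha>)" using trans by (blast intro: transI)
  qed
qed

lemma cube_rel_preserves:
  assumes f: "(m, f) \<in> E"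
  shows "preserves (m, f) (cube_rel E \<alpha>)"
  unfolding preserves.simps
proof (intro allI impI)
  fix xs ys assume l: "length xs = m" "length ys = m"
    and r: "list_all2 (\<lambda>x y. (x, y) \<in> cube_rel E \<alpha>) xs ys"
  let ?K = "corner_cube (length \<alpha>)"
  let ?cs = "map (\<lambda>(a, b). ?K a b) (zip xs ys)"
  have "length ?cs = m" using l by simp
  moreover have "set ?cs \<subseteq> cubes E \<alpha>"
    using r by (auto simp: cube_rel_def list_all2_iff)
  ultimately have "(\<lambda>s. f (map (\<lambda>c. c s) ?cs)) \<in> cubes E \<alpha>"
    by (rule cubes_closed[OF clone f])
  moreover have "map (\<lambda>c. c s) ?cs = (if \<forall>j<length \<alpha>. s j then ys else xs)" for s
    using l by (auto simp: corner_cube_def intro!: nth_equalityI)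
  then have "(\<lambda>s. f (map (\<lambda>c. c s) ?cs)) = ?K (f xs) (f ys)"
    by (intro ext) (auto simp: corner_cube_def)
  ultimately show "(f xs, f ys) \<in> cube_rel E \<alpha>" unfolding cube_rel_def by simp
qed

lemma cube_rel_Con:
  assumes "\<alpha> \<noteq> []" "\<forall>\<theta>\<in>set \<alpha>. equiv UNIV \<theta>"
  shows "cube_rel E \<alpha> \<in> Con E"
  unfolding Con_iff
proof
  show "equiv UNIV (cube_rel E \<alpha>)" by (rule cube_rel_equiv[OF assms])
  show "\<forall>x\<in>E. preserves x (cube_rel E \<alpha>)"
  proof
    fix x assume "x \<in> E"
    moreover obtain m f where "x = (m, f)" by force
    ultimately show "preserves x (cube_rel E \<alpha>)" using cube_rel_preserves by blast
  qed
qed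

lemma cube_rel_tops:
  assumes ne: "\<alpha> \<noteq> []" and equivs: "\<forall>\<theta>\<in>set \<alpha>. equiv UNIV \<theta>"
    and c: "c \<in> cubes E \<alpha>" and c': "c' \<in> cubes E \<alpha>"
    and agree: "\<And>s. \<not> (\<forall>j<length \<alpha>. s j) \<Longrightarrow> c s = c' s"
  shows "(c' (\<lambda>_. True), c (\<lambda>_. True)) \<in> cube_rel E \<alpha>"
proof -
  let ?u = "c' (\<lambda>_. True)"
  have "(\<lambda>s. q [c s, c' s, ?u]) \<in> cubes E \<alpha>"
    using malcev_in_cubes[OF c c' const_in_cubes_equiv[OF clone ne equivs]] .
  moreover have "(\<lambda>s. q [c s, c' s, ?u]) = corner_cube (length \<alpha>) ?u (c (\<lambda>_. True))"
  proof
    fix s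
    show "q [c s, c' s, ?u] = corner_cube (length \<alpha>) ?u (c (\<lambda>_. True)) s"
    proof (cases "\<forall>j<length \<alpha>. s j")
      case True
      then have "c s = c (\<lambda>_. True)" "c' s = ?u"
        using cubes_vertex_eq[OF c, of s "\<lambda>_. True"] cubes_vertex_eq[OF c', of s "\<lambda>_. True"] by simp_all
      then show ?thesis using True by (simp add: corner_cube_def malcev_right)
    next
      case False
      then have "corner_cube (length \<alpha>) ?u (c (\<lambda>_. True)) s = ?u"
        unfolding corner_cube_def by (subst if_not_P) auto
      then show ?thesis using agree[OF False] by (simp add: malcev_left)
    qed
  qed
  ultimately show ?thesis unfolding cube_rel_def by simp
qed

lemma cubes_update_vertex:
  assumes ne: "\<alpha> \<noteq> []" and equivs: "\<forall>\<theta>\<in>set \<alpha>. equiv UNIV \<theta>"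
    and c: "c \<in> cubes E \<alpha>" and rel: "(c w, v) \<in> cube_rel E \<alpha>"
  shows "(\<lambda>s. if \<forall>j<length \<alpha>. s j = w j then v else c s) \<in> cubes E \<alpha>"
proof -
  let ?n = "length \<alpha>" and ?u = "c w"
  let ?K = "\<lambda>s. corner_cube ?n ?u v (reflect w s)"
  have "?K \<in> cubes E \<alpha>"
    using reflect_in_cubes[OF equivs] rel unfolding cube_rel_def by blast
  then have "(\<lambda>s. q [c s, ?u, ?K s]) \<in> cubes E \<alpha>"
    using malcev_in_cubes[OF c const_in_cubes_equiv[OF clone ne equivs]] by blast
  moreover have "(\<lambda>s. q [c s, ?u, ?K s]) = (\<lambda>s. if \<forall>j<?n. s j = w j then v else c s)"
  proof
    fix s
    have reflect_top: "(\<forall>j<?n. reflect w s j) \<longleftrightarrow> (\<forall>j<?n. s j = w j)"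
      by (auto simp: reflect_def)
    show "q [c s, ?u, ?K s] = (if \<forall>j<?n. s j = w j then v else c s)"
    proof (cases "\<forall>j<?n. s j = w j")
      case True
      then have "c s = ?u" using cubes_vertex_eq[OF c] by blast
      moreover have "?K s = v" using True reflect_top by (simp add: corner_cube_def)
      ultimately show ?thesis using True by (simp add: malcev_left)
    next
      case False
      then have "?K s = ?u" using reflect_top unfolding corner_cube_def by (subst if_not_P) auto
      then show ?thesis by (subst if_not_P[OF False]) (simp add: malcev_right)
    qed
  qed
  ultimately show ?thesis by simp
qed

text \<open>Induction on the set $W$ of vertices, given by their sets of coordinates equal to 1,
  at which $e$ may differ from $c$; each vertex is corrected by \<open>cubes_update_vertex\<close>.\<close>
lemma cubes_perturb_finite:
  assumes ne: "\<alpha> \<noteq> []" and equivs: "\<forall>\<theta>\<in>set \<alpha>. equiv UNIV \<theta>" and c: "c \<in> cubes E \<alpha>"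
    and "finite W" and dep: "depends_on_first (length \<alpha>) e"
    and rel: "\<And>s. (c s, e s) \<in> cube_rel E \<alpha>"
    and outside: "\<And>s. {j. j < length \<alpha> \<and> s j} \<notin> W \<Longrightarrow> e s = c s"
  shows "e \<in> cubes E \<alpha>"
  using \<open>finite W\<close> dep rel outside
proof (induction W arbitrary: e rule: finite_induct)
  case empty
  then have "e = c" by auto
  then show ?case using c by simp
next
  case (insert w W)
  let ?n = "length \<alpha>"
  let ?ones = "\<lambda>s. {j. j < ?n \<and> s j}"
  have ones_eq: "?ones s = ?ones s' \<longleftrightarrow> (\<forall>j<?n. s j = s' j)" for s s' by blast
  have rel_refl: "(x, x) \<in> cube_rel E \<alpha>" for x
    using cube_rel_equiv[OF ne equivs] unfolding equiv_def refl_on_def by blast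
  define e' where "e' s = (if ?ones s = w then c s else e s)" for s
  have e': "e' \<in> cubes E \<alpha>"
  proof (rule insert.IH)
    show "depends_on_first ?n e'"
      unfolding depends_on_first_def
    proof (intro allI impI)
      fix s s' :: "nat \<Rightarrow> bool" assume same: "\<forall>j<?n. s j = s' j"
      then have "?ones s = ?ones s'" "c s = c s'" "e s = e s'"
        using cubes_vertex_eq[OF c] depends_on_firstD[OF insert.prems(1)] ones_eq by blast+
      then show "e' s = e' s'" by (simp add: e'_def)
    qed
    show "(c s, e' s) \<in> cube_rel E \<alpha>" for s
      using insert.prems(2) rel_refl by (simp add: e'_def)
    show "e' s = c s" if "?ones s \<notin> W" for s
      using insert.prems(3) that by (auto simp: e'_def)
  qed
  show ?case
  proof (cases "\<exists>s0. ?ones s0 = w")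
    case False
    then have "e' = e" by (auto simp: e'_def)
    then show ?thesis using e' by simp
  next
    case True
    then obtain s0 where s0: "?ones s0 = w" by blast
    have "(e' s0, e s0) \<in> cube_rel E \<alpha>" using insert.prems(2) s0 by (simp add: e'_def)
    from cubes_update_vertex[OF ne equivs e' this]
    have "(\<lambda>s. if \<forall>j<?n. s j = s0 j then e s0 else e' s) \<in> cubes E \<alpha>" .
    moreover have "(if \<forall>j<?n. s j = s0 j then e s0 else e' s) = e s" for s
    proof (cases "\<forall>j<?n. s j = s0 j")
      case True
      then show ?thesis using depends_on_firstD[OF insert.prems(1) True] by simp
    next
      case False
      then have "?ones s \<noteq> w" using s0 ones_eq by blast
      then show ?thesis by (subst if_not_P[OF False]) (simp add: e'_def)
    qed
    ultimately show ?thesis by simp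
  qed
qed

lemma cubes_perturb:
  assumes "\<alpha> \<noteq> []" "\<forall>\<theta>\<in>set \<alpha>. equiv UNIV \<theta>" "c \<in> cubes E \<alpha>"
    and "depends_on_first (length \<alpha>) e" "\<And>s. (c s, e s) \<in> cube_rel E \<alpha>"
  shows "e \<in> cubes E \<alpha>"
proof (rule cubes_perturb_finite[OF assms(1-3) _ assms(4,5)])
  show "finite (Pow {..<length \<alpha>})" by simp
  show "e s = c s" if "{j. j < length \<alpha> \<and> s j} \<notin> Pow {..<length \<alpha>}" for s
    using that by auto
qed

lemma cube_rel_term_condition:
  assumes ne: "\<alpha> \<noteq> []" and equivs: "\<forall>\<theta>\<in>set \<alpha>. equiv UNIV \<theta>" and c: "c \<in> cubes E \<alpha>"
    and n: "length \<alpha> = Suc k"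
    and prem: "\<And>s. \<not> (\<forall>j<k. s j) \<Longrightarrow> (c (s(k := False)), c (s(k := True))) \<in> cube_rel E \<alpha>"
  shows "(c ((\<lambda>_. True)(k := False)), c (\<lambda>_. True)) \<in> cube_rel E \<alpha>"
proof -
  have rel: "equiv UNIV (cube_rel E \<alpha>)" by (rule cube_rel_equiv[OF ne equivs])
  let ?d = "collapse k c"
  have d: "?d \<in> cubes E \<alpha>" by (rule collapse_in_cubes[OF equivs c])
  define e where "e s = (if s k \<and> \<not> (\<forall>j<k. s j) then ?d s else c s)" for s
  have "depends_on_first (length \<alpha>) e"
    unfolding depends_on_first_def
  proof (intro allI impI)
    fix s s' :: "nat \<Rightarrow> bool" assume same: "\<forall>j<length \<alpha>. s j = s' j"
    then have "s k = s' k" "(\<forall>j<k. s j) \<longleftrightarrow> (\<forall>j<k. s' j)" using n by auto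
    moreover have "?d s = ?d s'" "c s = c s'"
      using cubes_vertex_eq[OF d same] cubes_vertex_eq[OF c same] .
    ultimately show "e s = e s'" unfolding e_def by (simp only:)
  qed
  moreover have "(c s, e s) \<in> cube_rel E \<alpha>" for s
  proof (cases "s k \<and> \<not> (\<forall>j<k. s j)")
    case True
    then have "(?d s, c s) \<in> cube_rel E \<alpha>"
      using prem[of s] by (simp add: collapse_def fun_upd_idem)
    then show ?thesis using True rel by (simp add: e_def equiv_def sym_def)
  next
    case False
    then have "e s = c s" unfolding e_def by (subst if_not_P[OF False]) (rule refl)
    then show ?thesis using rel unfolding equiv_def refl_on_def by simp
  qed
  ultimately have e: "e \<in> cubes E \<alpha>" by (rule cubes_perturb[OF ne equivs c])
  have "(?d (\<lambda>_. True), e (\<lambda>_. True)) \<in> cube_rel E \<alpha>"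
  proof (rule cube_rel_tops[OF ne equivs e d])
    fix s assume "\<not> (\<forall>j<length \<alpha>. s j)"
    then have "s k \<Longrightarrow> \<not> (\<forall>j<k. s j)" using n less_Suc_eq by auto
    then show "e s = ?d s" by (cases "s k") (auto simp: e_def collapse_def fun_upd_idem)
  qed
  then show ?thesis by (simp add: e_def collapse_def)
qed

lemma centralizes_cube_rel:
  assumes ne: "\<alpha> \<noteq> []" and Con: "set \<alpha> \<subseteq> Con E"
  shows "centralizes E \<alpha> (cube_rel E \<alpha>)"
  unfolding centralizes_def Let_def
proof (intro allI impI)
  have equivs: "\<forall>\<theta>\<in>set \<alpha>. equiv UNIV \<theta>" using Con by (auto simp: Con_iff)
  obtain k where n: "length \<alpha> = Suc k" using ne by (cases "length \<alpha>") auto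
  fix m f as bs
  assume f: "(m, f) \<in> Clo E" and las: "length as = length \<alpha>" and lbs: "length bs = length \<alpha>"
    and blk: "\<forall>i<length \<alpha>. length (as ! i) = length (bs ! i) \<and> as ! i \<noteq> bs ! i \<and>
      list_all2 (\<lambda>x y. (x, y) \<in> \<alpha> ! i) (as ! i) (bs ! i)"
    and lc: "length (concat as) = m"
    and P: "\<forall>s. (\<exists>i<length \<alpha> - 1. \<not> s i) \<longrightarrow>
      (f (concat (map (\<lambda>i. if s i then bs ! i else as ! i) [0..<length \<alpha> - 1] @ [as ! (length \<alpha> - 1)])),
       f (concat (map (\<lambda>i. if s i then bs ! i else as ! i) [0..<length \<alpha> - 1] @ [bs ! (length \<alpha> - 1)])))
      \<in> cube_rel E \<alpha>"
  let ?c = "block_cube f as bs"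
  have c: "?c \<in> cubes E \<alpha>"
    using f las lbs blk lc clone_Clo_eq[OF clone] by (intro block_cube_in_cubes) auto
  have upd: "?c (s(k := x)) = f (concat (map (\<lambda>i. if s i then bs ! i else as ! i) [0..<k] @
      [if x then bs ! k else as ! k]))" for s x
    using las n by (intro block_cube_update_last) simp
  have "(?c ((\<lambda>_. True)(k := False)), ?c (\<lambda>_. True)) \<in> cube_rel E \<alpha>"
    using P n upd by (intro cube_rel_term_condition[OF ne equivs c n]) auto
  moreover have "(\<lambda>_. True)(k := True) = (\<lambda>_ :: nat. True)" by (rule ext) simp
  ultimately show "(f (concat (map (\<lambda>i. bs ! i) [0..<length \<alpha> - 1] @ [as ! (length \<alpha> - 1)])),
      f (concat (map (\<lambda>i. bs ! i) [0..<length \<alpha> - 1] @ [bs ! (length \<alpha> - 1)]))) \<in> cube_rel E \<alpha>"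
    using upd[of "\<lambda>_. True" False] upd[of "\<lambda>_. True" True] n by simp
qed

lemma cube_rel_subset_centralizing:
  assumes ne: "\<alpha> \<noteq> []" and Con: "set \<alpha> \<subseteq> Con E"
    and \<gamma>: "\<gamma> \<in> Con E" "centralizes E \<alpha> \<gamma>"
  shows "cube_rel E \<alpha> \<subseteq> \<gamma>"
proof (rule subrelI)
  fix u v assume "(u, v) \<in> cube_rel E \<alpha>"
  then have K: "corner_cube (length \<alpha>) u v \<in> cubes E \<alpha>" by (simp add: cube_rel_def)
  have equivs: "\<forall>\<theta>\<in>set \<alpha>. equiv UNIV \<theta>" using Con by (auto simp: Con_iff)
  have \<gamma>_refl: "(x, x) \<in> \<gamma>" for x using \<gamma>(1) by (auto simp: Con_iff equiv_def refl_on_def)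
  obtain k where n: "length \<alpha> = Suc k" using ne by (cases "length \<alpha>") auto
  show "(u, v) \<in> \<gamma>"
  proof (cases "u = v")
    case True then show ?thesis using \<gamma>_refl by simp
  next
    case False
    from cube_is_block_cube[OF clone K equivs corner_cube_nontrivial[OF K False]]
    obtain m f as bs where inst: "(m, f) \<in> E" "length as = length \<alpha>" "length bs = length \<alpha>"
      "\<forall>i<length \<alpha>. length (as ! i) = length (bs ! i) \<and> as ! i \<noteq> bs ! i \<and>
        list_all2 (\<lambda>x y. (x, y) \<in> \<alpha> ! i) (as ! i) (bs ! i)"
      "length (concat as) = m" and K_eq: "corner_cube (length \<alpha>) u v = block_cube f as bs"
      by blast
    have off_top: "corner_cube (length \<alpha>) u v (s(k := x)) = u" if "\<exists>i<k. \<not> s i" for s x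
      using that n unfolding corner_cube_def by (subst if_not_P) auto
    have "(m, f) \<in> Clo E" using inst(1) clone_Clo_eq[OF clone] by simp
    have "(corner_cube (length \<alpha>) u v ((\<lambda>_. True)(k := False)),
        corner_cube (length \<alpha>) u v (\<lambda>_. True)) \<in> \<gamma>"
      unfolding K_eq
    proof (rule centralizes_block_cubeD[OF \<gamma>(2) n \<open>(m, f) \<in> Clo E\<close> inst(2-5)])
      fix s assume "\<exists>i<k. \<not> s i"
      then show "(block_cube f as bs (s(k := False)), block_cube f as bs (s(k := True))) \<in> \<gamma>"
        using off_top \<gamma>_refl unfolding K_eq by simp
    qed
    moreover have "corner_cube (length \<alpha>) u v ((\<lambda>_. True)(k := False)) = u"
      using n unfolding corner_cube_def by (subst if_not_P) auto
    ultimately show ?thesis by (simp add: corner_cube_def)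
  qed
qed

lemma commutator_eq_cube_rel:
  assumes ne: "\<alpha> \<noteq> []" and Con: "set \<alpha> \<subseteq> Con E"
  shows "commutator E \<alpha> = cube_rel E \<alpha>"
proof
  have "cube_rel E \<alpha> \<in> Con E" using Con by (intro cube_rel_Con[OF ne]) (auto simp: Con_iff)
  then show "commutator E \<alpha> \<subseteq> cube_rel E \<alpha>"
    unfolding commutator_def using centralizes_cube_rel[OF ne Con] by blast
  show "cube_rel E \<alpha> \<subseteq> commutator E \<alpha>"
    unfolding commutator_def using cube_rel_subset_centralizing[OF ne Con] by blast
qed

end

section \<open>Cubes are determined by the commutators\<close>

text \<open>Out of the lower faces \<open>collapse j d\<close>, $j < n$, the Mal'cev operation builds a cube
  that agrees with $d$ everywhere except possibly at the top vertex.\<close>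
fun face_fill :: "('a list \<Rightarrow> 'a) \<Rightarrow> nat \<Rightarrow> 'a cube \<Rightarrow> 'a cube" where
  "face_fill q 0 d = d"
| "face_fill q (Suc 0) d = collapse 0 d"
| "face_fill q (Suc (Suc k)) d =
    (\<lambda>s. q [collapse (Suc k) d s, face_fill q (Suc k) (collapse (Suc k) d) s, face_fill q (Suc k) d s])"

lemma face_fill_local:
  "(\<And>s'. \<forall>j\<ge>Suc k. s' j = s j \<Longrightarrow> d s' = d' s') \<Longrightarrow> face_fill q (Suc k) d s = face_fill q (Suc k) d' s"
proof (induction k arbitrary: d d' s)
  case 0
  have "\<forall>j\<ge>Suc 0. (s(0 := False)) j = s j" by simp
  then have "d (s(0 := False)) = d' (s(0 := False))" using 0 by blast
  then show ?case unfolding face_fill.simps collapse_def .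
next
  case (Suc k)
  have coll: "collapse (Suc k) d s' = collapse (Suc k) d' s'" if "\<forall>j\<ge>Suc k. s' j = s j" for s'
  proof -
    have "\<forall>j\<ge>Suc (Suc k). (s'(Suc k := False)) j = s j" using that by simp
    then show ?thesis using Suc.prems unfolding collapse_def by blast
  qed
  have "face_fill q (Suc k) (collapse (Suc k) d) s = face_fill q (Suc k) (collapse (Suc k) d') s"
    by (rule Suc.IH, rule coll)
  moreover have "face_fill q (Suc k) d s = face_fill q (Suc k) d' s"
    by (rule Suc.IH) (use Suc.prems in simp)
  ultimately show ?case using coll[of s] by simp
qed

lemma face_fill_in_closed:
  assumes collapse: "\<And>c j. c \<in> R \<Longrightarrow> collapse j c \<in> R"
    and malcev: "\<And>c1 c2 c3. c1 \<in> R \<Longrightarrow> c2 \<in> R \<Longrightarrow> c3 \<in> R \<Longrightarrow> (\<lambda>s. q [c1 s, c2 s, c3 s]) \<in> R"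
    and faces: "\<forall>j\<le>k. collapse j d \<in> R"
  shows "face_fill q (Suc k) d \<in> R"
  using faces
proof (induction k arbitrary: d)
  case 0 then show ?case by simp
next
  case (Suc k)
  have "collapse (Suc k) d \<in> R" using Suc.prems by simp
  moreover then have "face_fill q (Suc k) (collapse (Suc k) d) \<in> R" using Suc.IH collapse by blast
  moreover have "face_fill q (Suc k) d \<in> R" using Suc.IH Suc.prems by simp
  ultimately show ?case using malcev by simp
qed

context malcev_clone
begin

lemma face_fill_agrees: "\<exists>j\<le>k. \<not> s j \<Longrightarrow> face_fill q (Suc k) d s = d s"
proof (induction k arbitrary: d s)
  case 0
  then have "s(0 := False) = s" by (auto simp: fun_upd_idem)
  then show ?case by (simp add: collapse_def)
next
  case (Suc k)
  show ?case
  proof (cases "s (Suc k)")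
    case False
    have "face_fill q (Suc k) (collapse (Suc k) d) s = face_fill q (Suc k) d s"
    proof (rule face_fill_local)
      fix s' :: "nat \<Rightarrow> bool" assume "\<forall>j\<ge>Suc k. s' j = s j"
      then have "s'(Suc k := False) = s'" using False by (auto simp: fun_upd_idem)
      then show "collapse (Suc k) d s' = d s'" by (simp add: collapse_def)
    qed
    moreover have "collapse (Suc k) d s = d s" using False by (simp add: collapse_def fun_upd_idem)
    ultimately show ?thesis by (simp add: malcev_right)
  next
    case True
    then have "\<exists>j\<le>k. \<not> s j" using Suc.prems le_Suc_eq by auto
    then show ?thesis using Suc.IH by (simp add: malcev_left)
  qed
qed

lemma face_fill_in_cubes:
  assumes "\<forall>\<theta>\<in>set \<alpha>. equiv UNIV \<theta>" "c \<in> cubes E \<alpha>"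
  shows "face_fill q (Suc k) c \<in> cubes E \<alpha>"
proof (rule face_fill_in_closed)
  show "collapse j c' \<in> cubes E \<alpha>" if "c' \<in> cubes E \<alpha>" for c' j
    by (rule collapse_in_cubes[OF assms(1) that])
  show "(\<lambda>s. q [c1 s, c2 s, c3 s]) \<in> cubes E \<alpha>"
    if "c1 \<in> cubes E \<alpha>" "c2 \<in> cubes E \<alpha>" "c3 \<in> cubes E \<alpha>" for c1 c2 c3
    by (rule malcev_in_cubes[OF that])
  show "\<forall>j\<le>k. collapse j c \<in> cubes E \<alpha>" using collapse_in_cubes[OF assms] by blast
qed

lemma face_fill_top_rel:
  assumes ne: "\<alpha> \<noteq> []" and equivs: "\<forall>\<theta>\<in>set \<alpha>. equiv UNIV \<theta>" and c: "c \<in> cubes E \<alpha>"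
    and n: "length \<alpha> = Suc k"
  shows "(face_fill q (Suc k) c (\<lambda>_. True), c (\<lambda>_. True)) \<in> cube_rel E \<alpha>"
proof (rule cube_rel_tops[OF ne equivs c face_fill_in_cubes[OF equivs c]])
  fix s assume "\<not> (\<forall>j<length \<alpha>. s j)"
  then have "\<exists>j\<le>k. \<not> s j" using n less_Suc_eq_le by auto
  then show "c s = face_fill q (Suc k) c s" by (rule face_fill_agrees[symmetric])
qed

lemma cube_of_face_fill:
  assumes ne: "\<alpha> \<noteq> []" and equivs: "\<forall>\<theta>\<in>set \<alpha>. equiv UNIV \<theta>" and n: "length \<alpha> = Suc k"
    and dep: "depends_on_first (length \<alpha>) c" and fill: "face_fill q (Suc k) c \<in> cubes E \<alpha>"
    and rel: "(face_fill q (Suc k) c (\<lambda>_. True), c (\<lambda>_. True)) \<in> cube_rel E \<alpha>"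
  shows "c \<in> cubes E \<alpha>"
proof -
  from cubes_update_vertex[OF ne equivs fill rel]
  have "(\<lambda>s. if \<forall>j<length \<alpha>. s j = True then c (\<lambda>_. True) else face_fill q (Suc k) c s) \<in> cubes E \<alpha>" .
  moreover have "(if \<forall>j<length \<alpha>. s j = True then c (\<lambda>_. True) else face_fill q (Suc k) c s) = c s" for s
  proof (cases "\<forall>j<length \<alpha>. s j")
    case True
    then show ?thesis using depends_on_firstD[OF dep, of s "\<lambda>_. True"] by simp
  next
    case False
    then have "\<exists>j\<le>k. \<not> s j" using n less_Suc_eq_le by auto
    then have "face_fill q (Suc k) c s = c s" by (rule face_fill_agrees)
    then show ?thesis using False by (subst if_not_P) simp_all
  qed
  ultimately show ?thesis by simp
qed

end

definition remove_nth :: "nat \<Rightarrow> 'b list \<Rightarrow> 'b list" where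
  "remove_nth j xs = take j xs @ drop (Suc j) xs"

lemma length_remove_nth: "j < length xs \<Longrightarrow> length (remove_nth j xs) = length xs - 1"
  by (simp add: remove_nth_def)

lemma nth_remove_nth:
  "j < length xs \<Longrightarrow> i < length xs - 1 \<Longrightarrow> remove_nth j xs ! i = (if i < j then xs ! i else xs ! Suc i)"
  by (auto simp: remove_nth_def nth_append min_def)

lemma set_remove_nth_subset: "set (remove_nth j xs) \<subseteq> set xs"
  unfolding remove_nth_def using set_take_subset set_drop_subset by fastforce

definition insert_coord :: "nat \<Rightarrow> (nat \<Rightarrow> bool) \<Rightarrow> (nat \<Rightarrow> bool)" where
  "insert_coord j s = (\<lambda>k. if k < j then s k else if k = j then False else s (k - 1))"

definition delete_coord :: "nat \<Rightarrow> (nat \<Rightarrow> bool) \<Rightarrow> (nat \<Rightarrow> bool)" where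
  "delete_coord j s = (\<lambda>k. if k < j then s k else s (Suc k))"

lemma insert_delete_coord: "insert_coord j (delete_coord j s) = s(j := False)"
  by (rule ext) (auto simp: insert_coord_def delete_coord_def)

lemma face_in_cubes:
  assumes c: "c \<in> cubes E \<alpha>" and j: "j < length \<alpha>" and n: "2 \<le> length \<alpha>"
    and equivs: "\<forall>\<theta>\<in>set \<alpha>. equiv UNIV \<theta>"
  shows "(\<lambda>s. c (insert_coord j s)) \<in> cubes E (remove_nth j \<alpha>)"
proof (rule cubes_reindex[OF c])
  fix k assume "is_coord_cube \<alpha> k"
  then obtain i a b where k: "i < length \<alpha>" "(a, b) \<in> \<alpha> ! i" "k = coord_cube i a b"
    unfolding is_coord_cube_def by blast
  have len: "length (remove_nth j \<alpha>) = length \<alpha> - 1" by (rule length_remove_nth[OF j])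
  consider "i < j" | "i = j" | "j < i" by linarith
  then show "is_coord_cube (remove_nth j \<alpha>) (\<lambda>s. k (insert_coord j s))"
  proof cases
    case 1
    then have "(\<lambda>s. k (insert_coord j s)) = coord_cube i a b" "remove_nth j \<alpha> ! i = \<alpha> ! i"
      using k j nth_remove_nth[OF j] by (auto simp: coord_cube_def insert_coord_def)
    moreover have "i < length (remove_nth j \<alpha>)" using 1 j len by simp
    ultimately show ?thesis using k unfolding is_coord_cube_def
      by (intro exI[of _ i] exI[of _ a] exI[of _ b]) simp
  next
    case 2
    have "(\<lambda>s. k (insert_coord j s)) = coord_cube 0 a a"
      using k(3) 2 by (intro ext) (simp add: coord_cube_def insert_coord_def)
    moreover have "(a, a) \<in> remove_nth j \<alpha> ! 0"
    proof (rule equiv_list_refl)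
      show "\<forall>\<theta>\<in>set (remove_nth j \<alpha>). equiv UNIV \<theta>" using equivs set_remove_nth_subset[of j \<alpha>] by blast
      show "0 < length (remove_nth j \<alpha>)" using len n by simp
    qed
    moreover have "0 < length (remove_nth j \<alpha>)" using len n by simp
    ultimately show ?thesis unfolding is_coord_cube_def
      by (intro exI[of _ 0] exI[of _ a] exI[of _ a]) simp
  next
    case 3
    then have "(\<lambda>s. k (insert_coord j s)) = coord_cube (i - 1) a b" "remove_nth j \<alpha> ! (i - 1) = \<alpha> ! i"
      using k nth_remove_nth[OF j, of "i - 1"] by (auto simp: coord_cube_def insert_coord_def)
    moreover have "i - 1 < length (remove_nth j \<alpha>)" using 3 k len by simp
    ultimately show ?thesis using k unfolding is_coord_cube_def
      by (intro exI[of _ "i - 1"] exI[of _ a] exI[of _ b]) simp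
  qed
qed

lemma cylinder_in_cubes:
  assumes d: "d \<in> cubes E (remove_nth j \<alpha>)" and j: "j < length \<alpha>"
  shows "(\<lambda>s. d (delete_coord j s)) \<in> cubes E \<alpha>"
proof (rule cubes_reindex[OF d])
  fix k assume "is_coord_cube (remove_nth j \<alpha>) k"
  then obtain i a b where k: "i < length (remove_nth j \<alpha>)" "(a, b) \<in> remove_nth j \<alpha> ! i" "k = coord_cube i a b"
    unfolding is_coord_cube_def by blast
  have len: "length (remove_nth j \<alpha>) = length \<alpha> - 1" by (rule length_remove_nth[OF j])
  show "is_coord_cube \<alpha> (\<lambda>s. k (delete_coord j s))"
  proof (cases "i < j")
    case True
    then have "(\<lambda>s. k (delete_coord j s)) = coord_cube i a b" "remove_nth j \<alpha> ! i = \<alpha> ! i"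
      using k len nth_remove_nth[OF j] by (auto simp: coord_cube_def delete_coord_def)
    moreover have "i < length \<alpha>" using True j by simp
    ultimately show ?thesis using k unfolding is_coord_cube_def
      by (intro exI[of _ i] exI[of _ a] exI[of _ b]) simp
  next
    case False
    then have "(\<lambda>s. k (delete_coord j s)) = coord_cube (Suc i) a b" "remove_nth j \<alpha> ! i = \<alpha> ! Suc i"
      using k len nth_remove_nth[OF j] by (auto simp: coord_cube_def delete_coord_def)
    moreover have "Suc i < length \<alpha>" using k len by simp
    ultimately show ?thesis using k unfolding is_coord_cube_def
      by (intro exI[of _ "Suc i"] exI[of _ a] exI[of _ b]) simp
  qed
qed

lemma collapse_in_cubes_by_faces:
  assumes E': "is_clone E'" and equivs: "\<forall>\<theta>\<in>set \<alpha>. equiv UNIV \<theta>"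
    and c: "c \<in> cubes E \<alpha>" and j: "j < length \<alpha>"
    and smaller: "\<And>\<beta>. \<beta> \<noteq> [] \<Longrightarrow> length \<beta> < length \<alpha> \<Longrightarrow> set \<beta> \<subseteq> set \<alpha> \<Longrightarrow> cubes E \<beta> \<subseteq> cubes E' \<beta>"
  shows "collapse j c \<in> cubes E' \<alpha>"
proof (cases "length \<alpha> = 1")
  case True
  then have "collapse j c s = c (\<lambda>_. False)" for s
    using j cubes_vertex_eq[OF c, of "s(j := False)" "\<lambda>_. False"] by (simp add: collapse_def)
  then have "collapse j c = (\<lambda>_. c (\<lambda>_. False))" by (rule ext)
  moreover have "\<alpha> \<noteq> []" using j by auto
  ultimately show ?thesis using const_in_cubes_equiv[OF E' _ equivs] by simp
next
  case False
  then have n: "2 \<le> length \<alpha>" using j by simp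
  then have "remove_nth j \<alpha> \<noteq> []" "length (remove_nth j \<alpha>) < length \<alpha>"
    using length_remove_nth[OF j] by auto
  moreover have "(\<lambda>s. c (insert_coord j s)) \<in> cubes E (remove_nth j \<alpha>)"
    using face_in_cubes[OF c j n equivs] .
  ultimately have "(\<lambda>s. c (insert_coord j s)) \<in> cubes E' (remove_nth j \<alpha>)"
    using smaller set_remove_nth_subset[of j \<alpha>] by blast
  from cylinder_in_cubes[OF this j] show ?thesis
    by (simp add: insert_delete_coord collapse_def)
qed

lemma cubes_subset_if_same_commutators:
  assumes m1: "malcev_clone E1 q" and m2: "malcev_clone E2 q"
    and Con1: "\<Theta> \<subseteq> Con E1" and Con2: "\<Theta> \<subseteq> Con E2"
    and comm: "\<And>\<beta>. \<beta> \<noteq> [] \<Longrightarrow> set \<beta> \<subseteq> \<Theta> \<Longrightarrow> commutator E1 \<beta> = commutator E2 \<beta>"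
    and "\<alpha> \<noteq> []" "set \<alpha> \<subseteq> \<Theta>"
  shows "cubes E1 \<alpha> \<subseteq> cubes E2 \<alpha>"
  using assms(6,7)
proof (induction "length \<alpha>" arbitrary: \<alpha> rule: less_induct)
  case less
  have equivs: "\<forall>\<theta>\<in>set \<alpha>. equiv UNIV \<theta>" using less.prems Con1 by (auto simp: Con_iff)
  obtain k where n: "length \<alpha> = Suc k" using less.prems by (cases "length \<alpha>") auto
  show ?case
  proof
    fix c assume c: "c \<in> cubes E1 \<alpha>"
    have faces: "\<forall>j\<le>k. collapse j c \<in> cubes E2 \<alpha>"
      using less.hyps less.prems n
      by (intro allI impI collapse_in_cubes_by_faces[OF malcev_clone.clone[OF m2] equivs c]) auto
    have "face_fill q (Suc k) c \<in> cubes E2 \<alpha>"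
    proof (rule face_fill_in_closed[OF _ _ faces])
      show "collapse j c' \<in> cubes E2 \<alpha>" if "c' \<in> cubes E2 \<alpha>" for c' j
        by (rule collapse_in_cubes[OF equivs that])
      show "(\<lambda>s. q [c1 s, c2 s, c3 s]) \<in> cubes E2 \<alpha>"
        if "c1 \<in> cubes E2 \<alpha>" "c2 \<in> cubes E2 \<alpha>" "c3 \<in> cubes E2 \<alpha>" for c1 c2 c3
        by (rule malcev_clone.malcev_in_cubes[OF m2 that])
    qed
    moreover have "(face_fill q (Suc k) c (\<lambda>_. True), c (\<lambda>_. True)) \<in> cube_rel E2 \<alpha>"
    proof -
      have "set \<alpha> \<subseteq> Con E1" "set \<alpha> \<subseteq> Con E2" using less.prems Con1 Con2 by auto
      then have "cube_rel E1 \<alpha> = cube_rel E2 \<alpha>"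
        using malcev_clone.commutator_eq_cube_rel[OF m1 less.prems(1)]
          malcev_clone.commutator_eq_cube_rel[OF m2 less.prems(1)] comm[OF less.prems] by simp
      then show ?thesis using malcev_clone.face_fill_top_rel[OF m1 less.prems(1) equivs c n] by simp
    qed
    ultimately show "c \<in> cubes E2 \<alpha>"
      by (rule malcev_clone.cube_of_face_fill[OF m2 less.prems(1) equivs n cubes_depends_on_first[OF c]])
  qed
qed

section \<open>The largest clone\<close>

lemma malcev_clone_transfer:
  "malcev_clone E q \<Longrightarrow> is_clone E' \<Longrightarrow> (3, q) \<in> E' \<Longrightarrow> malcev_clone E' q"
  unfolding malcev_clone_def by blast

lemma malcev_term_malcev_clone:
  assumes "malcev_term F q"
  obtains q' where "q = (3, q')" "malcev_clone (Clo F) q'"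
proof
  show "q = (3, snd q)" using assms by (simp add: malcev_term_def prod_eq_iff)
  then show "malcev_clone (Clo F) (snd q)"
    using assms is_clone_Clo unfolding malcev_term_def malcev_clone_def by metis
qed

fun preserves_cubes :: "'a operation \<Rightarrow> 'a cube set \<Rightarrow> bool" where
  "preserves_cubes (n, f) R \<longleftrightarrow>
     (\<forall>cs. length cs = n \<longrightarrow> set cs \<subseteq> R \<longrightarrow> (\<lambda>s. f (map (\<lambda>c. c s) cs)) \<in> R)"

lemma preserves_cubes_proj: "i < m \<Longrightarrow> preserves_cubes (proj_op m i) R"
  by (auto simp: proj_op_def cong: if_cong)

lemma preserves_cubes_comp:
  assumes f: "preserves_cubes (n, f) R" and gs: "length gs = n" "\<forall>g\<in>set gs. preserves_cubes (m, g) R"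
  shows "preserves_cubes (comp_op f m gs) R"
  unfolding comp_op_def preserves_cubes.simps
proof (intro allI impI)
  fix cs :: "'a cube list" assume cs: "length cs = m" "set cs \<subseteq> R"
  let ?ds = "map (\<lambda>g s. g (map (\<lambda>c. c s) cs)) gs"
  have "set ?ds \<subseteq> R" using gs(2) cs by auto
  then have "(\<lambda>s. f (map (\<lambda>d. d s) ?ds)) \<in> R"
    using f[unfolded preserves_cubes.simps, rule_format, of ?ds] gs(1) by simp
  then show "(\<lambda>s. if length (map (\<lambda>c. c s) cs) = m then f (map (\<lambda>g. g (map (\<lambda>c. c s) cs)) gs)
      else undefined) \<in> R"
    using cs(1) by (simp add: o_def)
qed

lemma clone_preserves_cubes:
  assumes "is_clone E" "(n, f) \<in> E" shows "preserves_cubes (n, f) (cubes E \<alpha>)"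
  using cubes_closed[OF assms] by simp

definition max_clone :: "'a operation set \<Rightarrow> 'a operation set" where
  "max_clone F = {(n, f). 0 < n \<and> (\<forall>xs. length xs \<noteq> n \<longrightarrow> f xs = undefined) \<and>
     (\<forall>\<theta>\<in>Con F. preserves (n, f) \<theta>) \<and>
     (\<forall>\<alpha>. \<alpha> \<noteq> [] \<longrightarrow> set \<alpha> \<subseteq> Con F \<longrightarrow> preserves_cubes (n, f) (cubes (Clo F) \<alpha>))}"

lemma is_clone_max_clone: "is_clone (max_clone F)"
  unfolding is_clone_def
proof (intro conjI allI impI)
  show "\<forall>(n, f)\<in>max_clone F. 0 < n \<and> (\<forall>xs. length xs \<noteq> n \<longrightarrow> f xs = undefined)"
    by (simp add: max_clone_def)
  fix m i :: nat assume "i < m"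
  then show "proj_op m i \<in> max_clone F"
    using preserves_cubes_proj[of i m]
    by (auto simp: max_clone_def proj_op_def list_all2_conv_all_nth)
next
  fix n f m and gs :: "('a list \<Rightarrow> 'a) list"
  assume f: "(n, f) \<in> max_clone F" and gs: "length gs = n" "\<forall>g\<in>set gs. (m, g) \<in> max_clone F"
  then have "0 < m" by (cases gs) (auto simp: max_clone_def)
  moreover have "\<forall>\<theta>\<in>Con F. preserves (comp_op f m gs) \<theta>"
    using f gs preserves_comp[of n f _ gs m] by (auto simp: max_clone_def)
  moreover have "\<forall>\<alpha>. \<alpha> \<noteq> [] \<longrightarrow> set \<alpha> \<subseteq> Con F \<longrightarrow> preserves_cubes (comp_op f m gs) (cubes (Clo F) \<alpha>)"
    using f gs preserves_cubes_comp[of n f _ gs m] by (auto simp: max_clone_def)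
  ultimately show "comp_op f m gs \<in> max_clone F"
    by (auto simp: max_clone_def comp_op_def)
qed

lemma Clo_subset_max_clone: "Clo F \<subseteq> max_clone F"
proof (rule subrelI)
  fix n f assume nf: "(n, f) \<in> Clo F"
  have "\<forall>\<theta>\<in>Con F. preserves (n, f) \<theta>" using Clo_preserves nf by blast
  moreover have "preserves_cubes (n, f) (cubes (Clo F) \<alpha>)" for \<alpha>
    by (rule clone_preserves_cubes[OF is_clone_Clo nf])
  ultimately show "(n, f) \<in> max_clone F"
    using Clo_normalized[OF nf] unfolding max_clone_def
    by (auto simp del: preserves.simps preserves_cubes.simps)
qed

lemma Con_max_clone: "Con (max_clone F) = Con F"
proof
  show "Con (max_clone F) \<subseteq> Con F"
  proof
    fix \<theta> assume "\<theta> \<in> Con (max_clone F)"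
    then have "\<theta> \<in> Con (Clo F)" using Clo_subset_max_clone unfolding Con_iff by blast
    then show "\<theta> \<in> Con F" by (simp add: Con_Clo)
  qed
  show "Con F \<subseteq> Con (max_clone F)"
    by (auto simp: Con_iff max_clone_def)
qed

lemma cubes_max_clone:
  assumes "\<alpha> \<noteq> []" "set \<alpha> \<subseteq> Con F"
  shows "cubes (max_clone F) \<alpha> = cubes (Clo F) \<alpha>"
proof
  show "cubes (max_clone F) \<alpha> \<subseteq> cubes (Clo F) \<alpha>"
  proof
    fix c assume "c \<in> cubes (max_clone F) \<alpha>"
    then obtain t ks where tks: "(length ks, t) \<in> max_clone F" "\<forall>k\<in>set ks. is_coord_cube \<alpha> k"
      "c = (\<lambda>s. t (map (\<lambda>k. k s) ks))"
      unfolding cubes_def by blast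
    have "set ks \<subseteq> cubes (Clo F) \<alpha>" using tks(2) coord_cube_in_cubes[OF is_clone_Clo] by blast
    then show "c \<in> cubes (Clo F) \<alpha>" using tks(1,3) assms by (simp add: max_clone_def)
  qed
  show "cubes (Clo F) \<alpha> \<subseteq> cubes (max_clone F) \<alpha>" by (rule cubes_mono[OF Clo_subset_max_clone])
qed

lemma same_con_comm_max_clone:
  assumes mal: "malcev_clone (Clo F) q"
  shows "same_con_comm (max_clone F) F"
  unfolding same_con_comm_def
proof (intro conjI allI impI)
  show "Con (max_clone F) = Con F" by (rule Con_max_clone)
  fix \<alpha> :: "'a rel list" assume "1 \<le> length \<alpha>" and sub: "set \<alpha> \<subseteq> Con F"
  then have ne: "\<alpha> \<noteq> []" by auto
  have mal': "malcev_clone (max_clone F) q"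
    using malcev_clone_transfer[OF mal is_clone_max_clone] malcev_clone.malcev_op[OF mal]
      Clo_subset_max_clone by blast
  have "set \<alpha> \<subseteq> Con (max_clone F)" unfolding Con_max_clone by (rule sub)
  then have "commutator (max_clone F) \<alpha> = cube_rel (max_clone F) \<alpha>"
    by (rule malcev_clone.commutator_eq_cube_rel[OF mal' ne])
  also have "\<dots> = cube_rel (Clo F) \<alpha>" by (simp add: cube_rel_def cubes_max_clone[OF ne sub])
  also have "\<dots> = commutator (Clo F) \<alpha>"
    using malcev_clone.commutator_eq_cube_rel[OF mal ne] sub by (simp add: Con_Clo)
  also have "\<dots> = commutator F \<alpha>" by (rule commutator_Clo)
  finally show "commutator (max_clone F) \<alpha> = commutator F \<alpha>" .
qed

lemma max_clone_greatest:
  assumes mal: "malcev_clone (Clo F) q" and malD: "malcev_clone D q" and same: "same_con_comm D F"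
  shows "D \<subseteq> max_clone F"
proof (rule subrelI)
  fix n f assume nf: "(n, f) \<in> D"
  have ConD: "Con D = Con F" using same by (simp add: same_con_comm_def)
  have "cubes (Clo F) \<alpha> = cubes D \<alpha>" if "\<alpha> \<noteq> []" "set \<alpha> \<subseteq> Con F" for \<alpha>
  proof -
    have comm: "commutator (Clo F) \<beta> = commutator D \<beta>" if "\<beta> \<noteq> []" "set \<beta> \<subseteq> Con F" for \<beta>
      using same that commutator_Clo[of F \<beta>] by (simp add: same_con_comm_def Suc_leI)
    have "Con F \<subseteq> Con (Clo F)" "Con F \<subseteq> Con D" using Con_Clo ConD by auto
    then show ?thesis
      using cubes_subset_if_same_commutators[OF mal malD _ _ comm that]
        cubes_subset_if_same_commutators[OF malD mal _ _ comm[symmetric] that] by blast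
  qed
  then have "preserves_cubes (n, f) (cubes (Clo F) \<alpha>)" if "\<alpha> \<noteq> []" "set \<alpha> \<subseteq> Con F" for \<alpha>
    using clone_preserves_cubes[OF malcev_clone.clone[OF malD] nf] that by simp
  moreover have "preserves (n, f) \<theta>" if "\<theta> \<in> Con F" for \<theta>
  proof -
    have "\<theta> \<in> Con D" using that ConD by simp
    then show ?thesis using nf unfolding Con_iff by blast
  qed
  ultimately show "(n, f) \<in> max_clone F"
    using clone_normalized[OF malcev_clone.clone[OF malD] nf] unfolding max_clone_def
    by (auto simp del: preserves.simps preserves_cubes.simps)
qed

theorem mainTheorem3:
  fixes F :: "'a operation set" and q :: "'a operation"
  assumes "malcev_term F q"
  shows "\<exists>C. is_clone C \<and> q \<in> C \<and> same_con_comm C F \<and>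
           (\<forall>D. is_clone D \<and> q \<in> D \<and> same_con_comm D F \<longrightarrow> D \<subseteq> C)"
proof -
  obtain q' where q: "q = (3, q')" and mal: "malcev_clone (Clo F) q'"
    using malcev_term_malcev_clone[OF assms] .
  have "q \<in> max_clone F" using malcev_clone.malcev_op[OF mal] Clo_subset_max_clone q by blast
  moreover have "D \<subseteq> max_clone F" if "is_clone D" "q \<in> D" "same_con_comm D F" for D
    using max_clone_greatest[OF mal malcev_clone_transfer[OF mal] that(3)] that q by simp
  ultimately show ?thesis
    using is_clone_max_clone same_con_comm_max_clone[OF mal] by blast
qed

end
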